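(* In the $q$-Onsager algebra $\mathcal O$, the elements $\xi_1=XY-YX$ and $\xi_2=X^2Y^2-Y^2X^2+(q^2+q^{-2})(YXYX-XYXY)$ commute if and only if $q^6\neq 1$.
   Context: Let $\mathbb F$ be a field and fix a nonzero $q\in\mathbb F$ with $q^4\neq 1$. Let $[3]_q=q^2+1+q^{-2}$. The $q$-Onsager algebra $\mathcal O$ is the associative $\mathbb F$-algebra with 1 defined by generators $X,Y$ and relations $X^3Y-[3]_q X^2YX+[3]_q XYX^2-YX^3 = -(q^2-q^{-2})^2(XY-YX)$ and $Y^3X-[3]_q Y^2XY+[3]_q YXY^2-XY^3 = -(q^2-q^{-2})^2(YX-XY)$. *)

theory Defs
  imports Main
begin

text \<open>The free associative algebra over a field 'a on generators X, Y:
  elements are finitely supported functions from words to coefficients.\<close>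

datatype gen = GX | GY

type_synonym 'a fa = "gen list \<Rightarrow> 'a"

definition fa_fin :: "'a::field fa \<Rightarrow> bool" where
  "fa_fin f \<longleftrightarrow> finite {w. f w \<noteq> 0}"

definition fa_zero :: "'a::field fa" where
  "fa_zero = (\<lambda>w. 0)"

definition fa_add :: "'a::field fa \<Rightarrow> 'a fa \<Rightarrow> 'a fa" where
  "fa_add f g = (\<lambda>w. f w + g w)"

definition fa_sub :: "'a::field fa \<Rightarrow> 'a fa \<Rightarrow> 'a fa" where
  "fa_sub f g = (\<lambda>w. f w - g w)"

definition fa_mul :: "'a::field fa \<Rightarrow> 'a fa \<Rightarrow> 'a fa" where
  "fa_mul f g = (\<lambda>w. \<Sum>(u, v) \<in> {(u, v). u @ v = w}. f u * g v)"

definition lc :: "('a::field \<times> gen list) list \<Rightarrow> 'a fa" where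
  "lc ps = (\<lambda>w. sum_list (map (\<lambda>(c, u). if u = w then c else 0) ps))"

inductive_set fa_ideal :: "'a::field fa set \<Rightarrow> 'a fa set" for R where
  gen: "r \<in> R \<Longrightarrow> r \<in> fa_ideal R"
| zero: "fa_zero \<in> fa_ideal R"
| add: "a \<in> fa_ideal R \<Longrightarrow> b \<in> fa_ideal R \<Longrightarrow> fa_add a b \<in> fa_ideal R"
| lmul: "fa_fin b \<Longrightarrow> a \<in> fa_ideal R \<Longrightarrow> fa_mul b a \<in> fa_ideal R"
| rmul: "fa_fin b \<Longrightarrow> a \<in> fa_ideal R \<Longrightarrow> fa_mul a b \<in> fa_ideal R"

definition qint3 :: "'a::field \<Rightarrow> 'a" where
  "qint3 q = q^2 + 1 + inverse (q^2)"

text \<open>The q-Onsager relations, written as (LHS - RHS).\<close>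
definition qons_rel1 :: "'a::field \<Rightarrow> 'a fa" where
  "qons_rel1 q = (let t = qint3 q; d = (q^2 - inverse (q^2))^2 in
     lc [(1, [GX,GX,GX,GY]), (-t, [GX,GX,GY,GX]), (t, [GX,GY,GX,GX]), (-1, [GY,GX,GX,GX]),
         (d, [GX,GY]), (-d, [GY,GX])])"

definition qons_rel2 :: "'a::field \<Rightarrow> 'a fa" where
  "qons_rel2 q = (let t = qint3 q; d = (q^2 - inverse (q^2))^2 in
     lc [(1, [GY,GY,GY,GX]), (-t, [GY,GY,GX,GY]), (t, [GY,GX,GY,GY]), (-1, [GX,GY,GY,GY]),
         (d, [GY,GX]), (-d, [GX,GY])])"

definition qons_ideal :: "'a::field \<Rightarrow> 'a fa set" where
  "qons_ideal q = fa_ideal {qons_rel1 q, qons_rel2 q}"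

text \<open>Two free-algebra elements commute in the q-Onsager algebra iff their
  commutator lies in the defining ideal.\<close>
definition qons_commute :: "'a::field \<Rightarrow> 'a fa \<Rightarrow> 'a fa \<Rightarrow> bool" where
  "qons_commute q a b \<longleftrightarrow> fa_sub (fa_mul a b) (fa_mul b a) \<in> qons_ideal q"

definition xi1 :: "'a::field fa" where
  "xi1 = lc [(1, [GX,GY]), (-1, [GY,GX])]"

definition xi2 :: "'a::field \<Rightarrow> 'a fa" where
  "xi2 q = (let s = q^2 + inverse (q^2) in
     lc [(1, [GX,GX,GY,GY]), (-1, [GY,GY,GX,GX]), (s, [GY,GX,GY,GX]), (-s, [GX,GY,GX,GY])])"

end

theory Submission
  imports Defs "HOL-Analysis.Cartesian_Space"
begin

text \<open>Put \<open>\<beta> = q\<^sup>2 + q\<^sup>-\<^sup>2\<close>. The defining relations depend on \<open>q\<close> only through \<open>\<beta>\<close>, and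
  (as \<open>q\<^sup>4 \<noteq> 1\<close>) \<open>q\<^sup>6 = 1\<close> iff \<open>q\<^sup>2\<close> is a primitive cube root of unity iff \<open>\<beta> = -1\<close>.
  For every \<open>\<beta>\<close>, \<open>(\<beta> + 1)[\<xi>\<^sub>1, \<xi>\<^sub>2]\<close> is an explicit two-sided combination of the relations,
  so \<open>\<xi>\<^sub>1\<close> and \<open>\<xi>\<^sub>2\<close> commute whenever \<open>[3]\<^sub>q = \<beta> + 1 \<noteq> 0\<close>. If \<open>\<beta> = -1\<close>, the field cannot
  have characteristic 3, and a 3-dimensional matrix representation in which the relations hold
  sends \<open>[\<xi>\<^sub>1, \<xi>\<^sub>2]\<close> to \<open>-81 E\<^sub>1\<^sub>3 \<noteq> 0\<close>, so the commutator is not in the defining ideal.\<close>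

section \<open>Linear combinations of words\<close>

definition lc_times :: "('a::field \<times> gen list) list \<Rightarrow> ('a \<times> gen list) list \<Rightarrow> ('a \<times> gen list) list" where
  "lc_times ps qs = [(c * d, u @ v). (c, u) \<leftarrow> ps, (d, v) \<leftarrow> qs]"

definition lc_uminus :: "('a::field \<times> gen list) list \<Rightarrow> ('a \<times> gen list) list" where
  "lc_uminus ps = [(- c, u). (c, u) \<leftarrow> ps]"

lemma lc_Nil [simp]: "lc [] w = 0"
  by (simp add: lc_def)

lemma lc_Cons: "lc ((c, u) # ps) w = (if u = w then c else 0) + lc ps w"
  by (simp add: lc_def)

lemma lc_append: "lc (ps @ qs) w = lc ps w + lc qs w"
  by (simp add: lc_def)

lemma fa_add_lc: "fa_add (lc ps) (lc qs) = lc (ps @ qs)"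
  by (simp add: fa_add_def lc_append fun_eq_iff)

lemma lc_Cons_fa_add: "lc (p # ps) = fa_add (lc [p]) (lc ps)"
  by (simp add: fa_add_lc)

lemma lc_lc_uminus: "lc (lc_uminus ps) w = - lc ps w"
  by (induction ps) (auto simp: lc_uminus_def lc_Cons)

lemma fa_sub_lc: "fa_sub (lc ps) (lc qs) = lc (ps @ lc_uminus qs)"
  by (simp add: fa_sub_def lc_append lc_lc_uminus fun_eq_iff)

lemma lc_eq_0_if_notin: "w \<notin> snd ` set ps \<Longrightarrow> lc ps w = 0"
  by (induction ps) (auto simp: lc_Cons)

lemma fa_fin_lc: "fa_fin (lc ps)"
  unfolding fa_fin_def
  by (rule finite_subset[of _ "snd ` set ps"]) (auto intro: ccontr dest: lc_eq_0_if_notin)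

lemma lc_eqI:
  assumes "\<And>w. w \<in> snd ` set (ps @ qs) \<Longrightarrow> lc ps w = lc qs w"
  shows "lc ps = lc qs"
proof
  fix w
  show "lc ps w = lc qs w"
    using assms[of w] lc_eq_0_if_notin[of w ps] lc_eq_0_if_notin[of w qs]
    by (metis Un_iff image_Un set_append)
qed

lemma fa_fin_lcE:
  assumes "fa_fin f"
  obtains ps where "f = lc ps"
proof -
  obtain ws where ws: "set ws = {w. f w \<noteq> 0}" "distinct ws"
    using assms finite_distinct_list unfolding fa_fin_def by blast
  have "lc (map (\<lambda>w. (f w, w)) ws) v = (if v \<in> set ws then f v else 0)" for v
    using ws(2) by (induction ws) (auto simp: lc_Cons)
  with ws(1) have "f = lc (map (\<lambda>w. (f w, w)) ws)"
    by auto
  then show thesis ..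
qed

lemma finite_append_splits: "finite {(u, v). u @ v = (w :: 'b list)}"
proof (rule finite_subset)
  show "{(u, v). u @ v = w} \<subseteq> (\<lambda>i. (take i w, drop i w)) ` {..length w}"
    by (auto simp: append_eq_conv_conj intro!: image_eqI dest: arg_cong[where f = length])
qed simp

lemma fa_mul_add_left: "fa_mul (fa_add f g) h = fa_add (fa_mul f h) (fa_mul g h)"
  by (simp add: fa_mul_def fa_add_def ring_distribs sum.distrib case_prod_beta)

lemma fa_mul_add_right: "fa_mul h (fa_add f g) = fa_add (fa_mul h f) (fa_mul h g)"
  by (simp add: fa_mul_def fa_add_def ring_distribs sum.distrib case_prod_beta)

lemma fa_mul_monomials: "fa_mul (lc [(c, u)]) (lc [(d, v)]) = lc [(c * d, u @ v)]"
proof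
  fix w
  have "fa_mul (lc [(c, u)]) (lc [(d, v)]) w
      = (\<Sum>x\<in>{(u', v'). u' @ v' = w}. if x = (u, v) then c * d else 0)"
    unfolding fa_mul_def by (rule sum.cong) (auto simp: lc_Cons split: if_splits)
  also have "\<dots> = lc [(c * d, u @ v)] w"
    using finite_append_splits[of w] by (auto simp: sum.delta' lc_Cons)
  finally show "fa_mul (lc [(c, u)]) (lc [(d, v)]) w = lc [(c * d, u @ v)] w" .
qed

lemma fa_mul_lc: "fa_mul (lc ps) (lc qs) = lc (lc_times ps qs)"
proof (induction ps)
  case Nil
  then show ?case by (simp add: fa_mul_def lc_times_def lc_def)
next
  case (Cons p ps)
  obtain c u where p: "p = (c, u)" by fastforce
  have single: "fa_mul (lc [(c, u)]) (lc qs) = lc (lc_times [(c, u)] qs)"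
  proof (induction qs)
    case Nil
    then show ?case by (simp add: fa_mul_def lc_times_def lc_def)
  next
    case (Cons q qs)
    obtain d v where q: "q = (d, v)" by fastforce
    have "fa_mul (lc [(c, u)]) (lc (q # qs))
        = fa_add (fa_mul (lc [(c, u)]) (lc [q])) (fa_mul (lc [(c, u)]) (lc qs))"
      by (simp only: lc_Cons_fa_add[of q qs] fa_mul_add_right)
    also have "\<dots> = lc (lc_times [(c, u)] (q # qs))"
      using Cons.IH by (simp add: q fa_mul_monomials fa_add_lc lc_times_def)
    finally show ?case .
  qed
  have "fa_mul (lc (p # ps)) (lc qs) = fa_add (fa_mul (lc [p]) (lc qs)) (fa_mul (lc ps) (lc qs))"
    by (simp only: lc_Cons_fa_add[of p ps] fa_mul_add_left)
  also have "\<dots> = lc (lc_times (p # ps) qs)"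
    using Cons.IH single by (simp add: p fa_add_lc lc_times_def)
  finally show ?case .
qed

lemma fa_mul_const_left: "fa_mul (lc [(c, [])]) f = (\<lambda>w. c * f w)"
proof
  fix w
  have "fa_mul (lc [(c, [])]) f w = (\<Sum>x\<in>{(u, v). u @ v = w}. if x = ([], w) then c * f w else 0)"
    unfolding fa_mul_def by (rule sum.cong) (auto simp: lc_Cons split: if_splits)
  then show "fa_mul (lc [(c, [])]) f w = c * f w"
    using finite_append_splits[of w] by (simp add: sum.delta')
qed

lemma fa_fin_add: "fa_fin f \<Longrightarrow> fa_fin g \<Longrightarrow> fa_fin (fa_add f g)"
  by (elim fa_fin_lcE) (simp add: fa_add_lc fa_fin_lc)

lemma fa_fin_mul: "fa_fin f \<Longrightarrow> fa_fin g \<Longrightarrow> fa_fin (fa_mul f g)"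
  by (elim fa_fin_lcE) (simp add: fa_mul_lc fa_fin_lc)

lemma fa_ideal_cancel_scalar:
  assumes "c \<noteq> 0" and "fa_mul (lc [(c, [])]) f \<in> fa_ideal R"
  shows "f \<in> fa_ideal R"
proof -
  have "fa_mul (lc [(inverse c, [])]) (fa_mul (lc [(c, [])]) f) \<in> fa_ideal R"
    by (rule fa_ideal.lmul[OF fa_fin_lc assms(2)])
  moreover have "fa_mul (lc [(inverse c, [])]) (fa_mul (lc [(c, [])]) f) = f"
    using assms(1) by (simp add: fa_mul_const_left fun_eq_iff)
  ultimately show ?thesis
    by simp
qed

section \<open>Matrix representations of the free algebra\<close>

lemma matrix_add_rdistrib: "(A + B) ** C = A ** C + B ** (C :: 'a::semiring_1^'p^'n)"
  by (simp add: vec_eq_iff matrix_matrix_mult_def sum.distrib distrib_right)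

lemma map_matrix_mult_add:
  "map_matrix ((*) (c + d)) A = map_matrix ((*) c) A + map_matrix ((*) d) (A :: 'a::semiring_1^'n^'m)"
  by (simp add: vec_eq_iff distrib_right)

lemma map_matrix_mult_uminus:
  "map_matrix ((*) (- c)) A = - map_matrix ((*) c) (A :: 'a::ring_1^'n^'m)"
  by (simp add: vec_eq_iff)

lemma map_matrix_mult_matrix_mult:
  "map_matrix ((*) (c * d)) (A ** B) = map_matrix ((*) c) A ** map_matrix ((*) d) (B :: 'a::comm_semiring_1^'p^'n)"
  by (simp add: vec_eq_iff matrix_matrix_mult_def sum_distrib_left mult_ac)

definition word_eval :: "(gen \<Rightarrow> 'a::field^'n^'n) \<Rightarrow> gen list \<Rightarrow> 'a^'n^'n" where
  "word_eval \<rho> w = foldr (\<lambda>g M. \<rho> g ** M) w (mat 1)"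

lemma word_eval_append: "word_eval \<rho> (u @ v) = word_eval \<rho> u ** word_eval \<rho> v"
  by (induction u) (simp_all add: word_eval_def matrix_mul_assoc)

definition lc_eval :: "(gen \<Rightarrow> 'a::field^'n^'n) \<Rightarrow> ('a \<times> gen list) list \<Rightarrow> 'a^'n^'n" where
  "lc_eval \<rho> ps = (\<Sum>(c, u)\<leftarrow>ps. map_matrix ((*) c) (word_eval \<rho> u))"

text \<open>Only meaningful for finitely supported \<open>f\<close>; otherwise the sum ranges over an infinite
  set and is \<open>0\<close>.\<close>
definition fa_eval :: "(gen \<Rightarrow> 'a::field^'n^'n) \<Rightarrow> 'a fa \<Rightarrow> 'a^'n^'n" where
  "fa_eval \<rho> f = (\<Sum>w | f w \<noteq> 0. map_matrix ((*) (f w)) (word_eval \<rho> w))"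

lemma fa_eval_superset:
  assumes "finite S" and "{w. f w \<noteq> 0} \<subseteq> S"
  shows "fa_eval \<rho> f = (\<Sum>w\<in>S. map_matrix ((*) (f w)) (word_eval \<rho> w))"
  unfolding fa_eval_def using assms
  by (intro sum.mono_neutral_left) (auto simp: vec_eq_iff)

lemma fa_eval_lc: "fa_eval \<rho> (lc ps) = lc_eval \<rho> ps"
proof -
  have "(\<Sum>w\<in>S. map_matrix ((*) (lc ps w)) (word_eval \<rho> w)) = lc_eval \<rho> ps"
    if "finite S" "snd ` set ps \<subseteq> S" for S
    using that
  proof (induction ps)
    case Nil
    then show ?case by (simp add: lc_eval_def vec_eq_iff)
  next
    case (Cons p ps)
    obtain c u where p: "p = (c, u)" by fastforce
    have "(\<Sum>w\<in>S. map_matrix ((*) (if u = w then c else 0)) (word_eval \<rho> w))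
        = (\<Sum>w\<in>S. if u = w then map_matrix ((*) c) (word_eval \<rho> w) else 0)"
      by (rule sum.cong) (auto simp: vec_eq_iff)
    also have "\<dots> = map_matrix ((*) c) (word_eval \<rho> u)"
      using Cons.prems by (simp add: p)
    finally have head: "(\<Sum>w\<in>S. map_matrix ((*) (if u = w then c else 0)) (word_eval \<rho> w))
        = map_matrix ((*) c) (word_eval \<rho> u)" .
    have "(\<Sum>w\<in>S. map_matrix ((*) (lc (p # ps) w)) (word_eval \<rho> w))
        = (\<Sum>w\<in>S. map_matrix ((*) (if u = w then c else 0)) (word_eval \<rho> w))
          + (\<Sum>w\<in>S. map_matrix ((*) (lc ps w)) (word_eval \<rho> w))"
      by (simp add: p lc_Cons map_matrix_mult_add sum.distrib)
    with head Cons show ?case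
      by (simp add: p lc_eval_def)
  qed
  moreover have "{w. lc ps w \<noteq> 0} \<subseteq> snd ` set ps"
    using lc_eq_0_if_notin by blast
  ultimately show ?thesis
    using fa_eval_superset[of "snd ` set ps" "lc ps" \<rho>] by simp
qed

lemma lc_eval_append: "lc_eval \<rho> (ps @ qs) = lc_eval \<rho> ps + lc_eval \<rho> qs"
  by (simp add: lc_eval_def)

lemma lc_eval_Nil [simp]: "lc_eval \<rho> [] = 0"
  by (simp add: lc_eval_def)

lemma lc_eval_Cons: "lc_eval \<rho> ((c, u) # ps) = map_matrix ((*) c) (word_eval \<rho> u) + lc_eval \<rho> ps"
  by (simp add: lc_eval_def)

lemma lc_eval_uminus: "lc_eval \<rho> (lc_uminus ps) = - lc_eval \<rho> ps"
  by (induction ps) (auto simp: lc_eval_Cons lc_uminus_def map_matrix_mult_uminus)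

lemma lc_eval_times: "lc_eval \<rho> (lc_times ps qs) = lc_eval \<rho> ps ** lc_eval \<rho> qs"
proof (induction ps)
  case Nil
  then show ?case by (simp add: lc_times_def)
next
  case (Cons p ps)
  obtain c u where p: "p = (c, u)" by fastforce
  have "lc_eval \<rho> (lc_times [(c, u)] qs) = map_matrix ((*) c) (word_eval \<rho> u) ** lc_eval \<rho> qs"
  proof (induction qs)
    case Nil
    then show ?case by (simp add: lc_times_def)
  next
    case (Cons q qs)
    obtain d v where q: "q = (d, v)" by fastforce
    have "lc_times [(c, u)] (q # qs) = (c * d, u @ v) # lc_times [(c, u)] qs"
      by (simp add: q lc_times_def)
    with Cons.IH show ?case
      by (simp only: q lc_eval_Cons word_eval_append map_matrix_mult_matrix_mult matrix_add_ldistrib)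
  qed
  moreover have "lc_times (p # ps) qs = lc_times [(c, u)] qs @ lc_times ps qs"
    by (simp add: p lc_times_def)
  ultimately show ?case
    using Cons.IH by (simp add: p lc_eval_append lc_eval_Cons matrix_add_rdistrib)
qed

lemma fa_eval_add:
  assumes "fa_fin f" and "fa_fin g"
  shows "fa_eval \<rho> (fa_add f g) = fa_eval \<rho> f + fa_eval \<rho> g"
proof -
  obtain ps qs where "f = lc ps" and "g = lc qs"
    using assms by (elim fa_fin_lcE)
  then show ?thesis by (simp add: fa_add_lc fa_eval_lc lc_eval_append)
qed

lemma fa_eval_sub:
  assumes "fa_fin f" and "fa_fin g"
  shows "fa_eval \<rho> (fa_sub f g) = fa_eval \<rho> f - fa_eval \<rho> g"
proof -
  obtain ps qs where "f = lc ps" and "g = lc qs"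
    using assms by (elim fa_fin_lcE)
  then show ?thesis by (simp add: fa_sub_lc fa_eval_lc lc_eval_append lc_eval_uminus)
qed

lemma fa_eval_mul:
  assumes "fa_fin f" and "fa_fin g"
  shows "fa_eval \<rho> (fa_mul f g) = fa_eval \<rho> f ** fa_eval \<rho> g"
proof -
  obtain ps qs where "f = lc ps" and "g = lc qs"
    using assms by (elim fa_fin_lcE)
  then show ?thesis by (simp add: fa_mul_lc fa_eval_lc lc_eval_times)
qed

lemma fa_ideal_fin_and_eval_eq_0:
  assumes "f \<in> fa_ideal R" and "\<And>r. r \<in> R \<Longrightarrow> fa_fin r \<and> fa_eval \<rho> r = 0"
  shows "fa_fin f \<and> fa_eval \<rho> f = 0"
  using assms(1)
proof induction
  case zero
  show ?case by (simp add: fa_fin_def fa_eval_def fa_zero_def)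
qed (simp_all add: assms(2) fa_fin_add fa_fin_mul fa_eval_add fa_eval_mul)

section \<open>The relations in terms of \<open>\<beta> = q\<^sup>2 + q\<^sup>-\<^sup>2\<close>\<close>

text \<open>With \<open>\<beta> = q\<^sup>2 + q\<^sup>-\<^sup>2\<close> one has \<open>[3]\<^sub>q = \<beta> + 1\<close> and
  \<open>(q\<^sup>2 - q\<^sup>-\<^sup>2)\<^sup>2 = \<beta>\<^sup>2 - 4\<close>, so the relations and \<open>\<xi>\<^sub>2\<close> depend on \<open>q\<close> only through \<open>\<beta>\<close>.\<close>

definition onsager_rel1 :: "'a::field \<Rightarrow> 'a fa" where
  "onsager_rel1 \<beta> = lc [(1, [GX,GX,GX,GY]), (-(\<beta> + 1), [GX,GX,GY,GX]), (\<beta> + 1, [GX,GY,GX,GX]),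
     (-1, [GY,GX,GX,GX]), (\<beta> * \<beta> - 4, [GX,GY]), (-(\<beta> * \<beta> - 4), [GY,GX])]"

definition onsager_rel2 :: "'a::field \<Rightarrow> 'a fa" where
  "onsager_rel2 \<beta> = lc [(1, [GY,GY,GY,GX]), (-(\<beta> + 1), [GY,GY,GX,GY]), (\<beta> + 1, [GY,GX,GY,GY]),
     (-1, [GX,GY,GY,GY]), (\<beta> * \<beta> - 4, [GY,GX]), (-(\<beta> * \<beta> - 4), [GX,GY])]"

definition onsager_xi2 :: "'a::field \<Rightarrow> 'a fa" where
  "onsager_xi2 \<beta> = lc [(1, [GX,GX,GY,GY]), (-1, [GY,GY,GX,GX]), (\<beta>, [GY,GX,GY,GX]), (-\<beta>, [GX,GY,GX,GY])]"

lemma onsager_commutator_identity: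
  "fa_mul (lc [(\<beta> + 1, [])]) (fa_sub (fa_mul xi1 (onsager_xi2 \<beta>)) (fa_mul (onsager_xi2 \<beta>) xi1)) =
   fa_add (fa_mul (lc [(\<beta> * \<beta> - 4, [])]) (fa_add (onsager_rel1 \<beta>) (onsager_rel2 \<beta>)))
  (fa_add (fa_mul (lc [(1, [GX,GX])]) (onsager_rel2 \<beta>))
  (fa_add (fa_mul (onsager_rel2 \<beta>) (lc [(1, [GX,GX])]))
  (fa_add (fa_mul (lc [(-\<beta>, [GX])]) (fa_mul (onsager_rel2 \<beta>) (lc [(1, [GX])])))
  (fa_add (fa_mul (lc [(1, [GY,GY])]) (onsager_rel1 \<beta>))
  (fa_add (fa_mul (onsager_rel1 \<beta>) (lc [(1, [GY,GY])]))
          (fa_mul (lc [(-\<beta>, [GY])]) (fa_mul (onsager_rel1 \<beta>) (lc [(1, [GY])]))))))))"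
  unfolding onsager_rel1_def onsager_rel2_def onsager_xi2_def xi1_def fa_sub_lc fa_mul_lc fa_add_lc
  by (rule lc_eqI) (simp add: lc_times_def lc_uminus_def lc_def algebra_simps)

text \<open>At \<open>\<beta> = -1\<close> the relations read \<open>[X\<^sup>3, Y] = 3[X, Y]\<close> and \<open>[Y\<^sup>3, X] = 3[Y, X]\<close>.\<close>
definition onsager_rep :: "gen \<Rightarrow> 'a::field^3^3" where
  "onsager_rep g = (case g of
      GX \<Rightarrow> vector [vector [2, -1, 0], vector [0, -1, 0], vector [0, 0, 2]]
    | GY \<Rightarrow> vector [vector [2, 0, 0], vector [0, -1, -1], vector [0, 0, -1]])"

lemma fa_eval_onsager_rel1: "fa_eval onsager_rep (onsager_rel1 (-1 :: 'a::field)) = 0"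
  by (simp add: onsager_rel1_def fa_eval_lc lc_eval_Cons word_eval_def onsager_rep_def
      vec_eq_iff forall_3 matrix_matrix_mult_def sum_3 mat_def)

lemma fa_eval_onsager_rel2: "fa_eval onsager_rep (onsager_rel2 (-1 :: 'a::field)) = 0"
  by (simp add: onsager_rel2_def fa_eval_lc lc_eval_Cons word_eval_def onsager_rep_def
      vec_eq_iff forall_3 matrix_matrix_mult_def sum_3 mat_def)

lemma fa_eval_xi1:
  "fa_eval onsager_rep (xi1 :: 'a::field fa) = vector [vector [0, 3, 1], vector [0, 0, 3], vector [0, 0, 0]]"
  by (simp add: xi1_def fa_eval_lc lc_eval_Cons word_eval_def onsager_rep_def
      vec_eq_iff forall_3 matrix_matrix_mult_def sum_3 mat_def)

lemma fa_eval_onsager_xi2: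
  "fa_eval onsager_rep (onsager_xi2 (-1 :: 'a::field))
    = vector [vector [0, 18, -3], vector [0, 0, -9], vector [0, 0, 0]]"
  by (simp add: onsager_xi2_def fa_eval_lc lc_eval_Cons word_eval_def onsager_rep_def
      vec_eq_iff forall_3 matrix_matrix_mult_def sum_3 mat_def)

lemma onsager_commutator_notin_ideal:
  assumes "(3 :: 'a::field) \<noteq> 0"
  shows "fa_sub (fa_mul xi1 (onsager_xi2 (-1))) (fa_mul (onsager_xi2 (-1)) xi1)
    \<notin> fa_ideal {onsager_rel1 (-1), onsager_rel2 (-1 :: 'a)}" (is "?C \<notin> _")
proof
  assume C_in: "?C \<in> fa_ideal {onsager_rel1 (-1), onsager_rel2 (-1)}"
  have "fa_fin r \<and> fa_eval onsager_rep r = 0" if "r \<in> {onsager_rel1 (-1), onsager_rel2 (-1 :: 'a)}" for r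
    using that fa_eval_onsager_rel1 fa_eval_onsager_rel2
    by (auto simp: onsager_rel1_def onsager_rel2_def fa_fin_lc)
  with C_in have "fa_eval onsager_rep ?C = 0"
    by (blast dest: fa_ideal_fin_and_eval_eq_0)
  moreover have "fa_fin (xi1 :: 'a fa)" and "fa_fin (onsager_xi2 (-1 :: 'a))"
    by (simp_all add: xi1_def onsager_xi2_def fa_fin_lc)
  then have "fa_eval onsager_rep ?C $ 1 $ 3 = -(3 ^ 4 :: 'a)"
    by (simp add: fa_eval_sub fa_eval_mul fa_fin_mul fa_eval_xi1 fa_eval_onsager_xi2
        matrix_matrix_mult_def sum_3)
  ultimately have "(3 :: 'a) ^ 4 = 0"
    by simp
  with power_not_zero[OF assms] show False
    by blast
qed

section \<open>Primitive cube roots of unity\<close>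

lemma cube_root_of_unity_iff:
  fixes p :: "'a::field"
  assumes "p \<noteq> 0" and "p \<noteq> 1"
  shows "p ^ 3 = 1 \<longleftrightarrow> p + inverse p = -1"
proof -
  have "p ^ 3 - 1 = (p - 1) * (p * (p + inverse p + 1))"
    using assms(1) by (simp add: field_simps power3_eq_cube)
  then show ?thesis
    using assms by (auto simp: right_minus_eq eq_neg_iff_add_eq_0 add.assoc)
qed

lemma primitive_cube_root_char_ne_3:
  fixes p :: "'a::field"
  assumes "p ^ 3 = 1" and "p \<noteq> 1"
  shows "(3 :: 'a) \<noteq> 0"
proof
  assume "(3 :: 'a) = 0"
  have "(p - 1) * (p ^ 2 + p + 1) = 0"
    using assms(1) by (simp add: algebra_simps power2_eq_square power3_eq_cube)
  then have "p ^ 2 + p + 1 = 0"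
    using assms(2) by simp
  moreover have "(p - 1) ^ 2 = (p ^ 2 + p + 1) - 3 * p"
    by (simp add: power2_eq_square algebra_simps)
  ultimately have "(p - 1) ^ 2 = 0"
    using \<open>(3 :: 'a) = 0\<close> by simp
  with assms(2) show False
    by simp
qed

lemma onsager_commutator_in_ideal:
  fixes \<beta> :: "'a::field"
  assumes "\<beta> + 1 \<noteq> 0"
  shows "fa_sub (fa_mul xi1 (onsager_xi2 \<beta>)) (fa_mul (onsager_xi2 \<beta>) xi1)
    \<in> fa_ideal {onsager_rel1 \<beta>, onsager_rel2 \<beta>}"
proof (rule fa_ideal_cancel_scalar[OF assms])
  have "onsager_rel1 \<beta> \<in> fa_ideal {onsager_rel1 \<beta>, onsager_rel2 \<beta>}"
    and "onsager_rel2 \<beta> \<in> fa_ideal {onsager_rel1 \<beta>, onsager_rel2 \<beta>}"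
    by (simp_all add: fa_ideal.gen)
  then show "fa_mul (lc [(\<beta> + 1, [])]) (fa_sub (fa_mul xi1 (onsager_xi2 \<beta>)) (fa_mul (onsager_xi2 \<beta>) xi1))
      \<in> fa_ideal {onsager_rel1 \<beta>, onsager_rel2 \<beta>}"
    unfolding onsager_commutator_identity
    by (intro fa_ideal.add fa_ideal.lmul[OF fa_fin_lc] fa_ideal.rmul[OF fa_fin_lc])
qed

lemma qons_ideal_eq_onsager:
  fixes q :: "'a::field"
  assumes "q \<noteq> 0"
  shows "qons_ideal q = fa_ideal {onsager_rel1 (q^2 + inverse (q^2)), onsager_rel2 (q^2 + inverse (q^2))}"
proof -
  have "qint3 q = (q^2 + inverse (q^2)) + 1"
    by (simp add: qint3_def algebra_simps)
  moreover have "(q^2 - inverse (q^2))^2 = (q^2 + inverse (q^2)) * (q^2 + inverse (q^2)) - 4"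
    using assms by (simp add: field_simps power2_eq_square)
  ultimately show ?thesis
    by (simp add: qons_ideal_def qons_rel1_def qons_rel2_def onsager_rel1_def onsager_rel2_def Let_def)
qed

lemma xi2_eq_onsager_xi2: "xi2 q = onsager_xi2 (q^2 + inverse (q^2))"
  by (simp add: xi2_def onsager_xi2_def)

theorem proposition9p4:
  fixes q :: "'a::field"
  assumes "q \<noteq> 0" and "q ^ 4 \<noteq> 1"
  shows "qons_commute q xi1 (xi2 q) \<longleftrightarrow> q ^ 6 \<noteq> 1"
proof -
  define \<beta> where "\<beta> = q^2 + inverse (q^2)"
  have commute_iff: "qons_commute q xi1 (xi2 q) \<longleftrightarrow>
      fa_sub (fa_mul xi1 (onsager_xi2 \<beta>)) (fa_mul (onsager_xi2 \<beta>) xi1)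
        \<in> fa_ideal {onsager_rel1 \<beta>, onsager_rel2 \<beta>}"
    using assms(1) by (simp add: qons_commute_def qons_ideal_eq_onsager xi2_eq_onsager_xi2 \<beta>_def)
  have "q^2 \<noteq> 1"
  proof
    assume "q^2 = 1"
    then have "(q^2)^2 = 1"
      by simp
    with assms(2) show False
      by (simp flip: power_mult)
  qed
  moreover have "q^2 \<noteq> 0"
    using assms(1) by simp
  ultimately have q6_iff: "q^6 = 1 \<longleftrightarrow> \<beta> = -1"
    using cube_root_of_unity_iff[of "q^2"] by (simp add: \<beta>_def flip: power_mult)
  show ?thesis
  proof (cases "q^6 = 1")
    case True
    then have "(3 :: 'a) \<noteq> 0"
      using primitive_cube_root_char_ne_3[of "q^2"] \<open>q^2 \<noteq> 1\<close> by (simp flip: power_mult)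
    with True show ?thesis
      using commute_iff q6_iff onsager_commutator_notin_ideal by simp
  next
    case False
    then have "\<beta> + 1 \<noteq> 0"
      using q6_iff by (simp add: add_eq_0_iff2)
    with False show ?thesis
      using commute_iff onsager_commutator_in_ideal by simp
  qed
qed

end
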